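(* Let $E$ be a Banach space, $S:\mathbb{R}^d\times E\to\mathbb{R}^d$ a map and $x_0\in\mathbb{R}^d$. Suppose there exist a closed ball $D\subset\mathbb{R}^d$ (of positive radius) and a continuous map $f:D\to E$ such that $S(x_0,f(x))=x$ for all $x\in D$. Then $S$ is solidly controllable from $x_0$ with the compact set $Q=f(D)$.
   Context: Solid controllability: a map $S:\mathbb{R}^d\times E\to\mathbb{R}^d$, $E$ a Banach space, is solidly controllable from $x_0$ with a compact set $Q\subset E$ if there exist a ball $G\subset\mathbb{R}^d$ and a number $\epsilon>0$ such that every continuous map $\Phi:Q\to\mathbb{R}^d$ satisfying $\sup_{\zeta\in Q}|\Phi(\zeta)-S(x_0,\zeta)|\le\epsilon$ satisfies $\Phi(Q)\supseteq G$. *)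

theory Defs
  imports "HOL-Analysis.Analysis"
begin

definition solidly_controllable ::
  "(real^'d \<Rightarrow> 'e::banach \<Rightarrow> real^'d) \<Rightarrow> real^'d \<Rightarrow> 'e set \<Rightarrow> bool" where
  "solidly_controllable S x0 Q \<longleftrightarrow>
     (\<exists>c r \<epsilon>. r > 0 \<and> \<epsilon> > 0 \<and>
        (\<forall>\<Phi>. continuous_on Q \<Phi> \<longrightarrow>
              (\<forall>\<zeta>\<in>Q. norm (\<Phi> \<zeta> - S x0 \<zeta>) \<le> \<epsilon>) \<longrightarrow>
              ball c r \<subseteq> \<Phi> ` Q))"

end

theory Submission
  imports Defs
begin

text \<open>Composing a perturbation \<open>\<Phi>\<close> of \<open>S x0\<close> with the right inverse \<open>f\<close> gives a continuous
  self-map of the ball \<open>D\<close> that is uniformly close to the identity, and by Brouwer's fixed point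
  theorem such a map covers a concentric smaller ball.\<close>

lemma ball_subset_image_near_identity:
  fixes g :: "'a::euclidean_space \<Rightarrow> 'a"
  assumes "r > 0" and "continuous_on (cball a r) g"
    and near: "\<forall>y\<in>cball a r. dist (g y) y \<le> e"
  shows "ball a (r - e) \<subseteq> g ` cball a r"
proof
  fix x assume x: "x \<in> ball a (r - e)"
  have "\<exists>y\<in>cball a r. g y = x"
  proof (rule brouwer_surjective_cball[OF assms(2,1) x])
    fix x' y assume x': "x' \<in> ball a (r - e)" and y: "y \<in> cball a r"
    have "a - (x' + (y - g y)) = (a - x') - (y - g y)" by simp
    then have "dist a (x' + (y - g y)) \<le> dist a x' + dist (g y) y"
      by (metis dist_norm norm_minus_commute norm_triangle_ineq4)
    also have "\<dots> \<le> r" using x' near y by (fastforce simp: dist_commute)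
    finally show "x' + (y - g y) \<in> cball a r" by simp
  qed
  then show "x \<in> g ` cball a r" by blast
qed

theorem mainTheorem6:
  fixes S :: "real^'d \<Rightarrow> 'e::banach \<Rightarrow> real^'d"
    and x0 :: "real^'d" and a :: "real^'d" and \<rho> :: real
    and f :: "real^'d \<Rightarrow> 'e"
  assumes "\<rho> > 0"
    and "continuous_on (cball a \<rho>) f"
    and "\<forall>x\<in>cball a \<rho>. S x0 (f x) = x"
  shows "compact (f ` cball a \<rho>) \<and> solidly_controllable S x0 (f ` cball a \<rho>)"
proof
  show "compact (f ` cball a \<rho>)"
    by (rule compact_continuous_image[OF assms(2) compact_cball])
  have "ball a (\<rho>/2) \<subseteq> \<Phi> ` f ` cball a \<rho>"
    if "continuous_on (f ` cball a \<rho>) \<Phi>"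
      and "\<forall>\<zeta>\<in>f ` cball a \<rho>. norm (\<Phi> \<zeta> - S x0 \<zeta>) \<le> \<rho>/2" for \<Phi>
  proof -
    have "continuous_on (cball a \<rho>) (\<Phi> \<circ> f)"
      by (rule continuous_on_compose[OF assms(2) that(1)])
    moreover have "\<forall>y\<in>cball a \<rho>. dist ((\<Phi> \<circ> f) y) y \<le> \<rho>/2"
      using that(2) assms(3) by (simp add: dist_norm)
    ultimately have "ball a (\<rho> - \<rho>/2) \<subseteq> (\<Phi> \<circ> f) ` cball a \<rho>"
      using assms(1) by (intro ball_subset_image_near_identity)
    then show ?thesis by (simp add: image_comp)
  qed
  then show "solidly_controllable S x0 (f ` cball a \<rho>)"
    unfolding solidly_controllable_def using assms(1) by (intro exI[of _ a] exI[of _ "\<rho>/2"]) auto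
qed

end
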